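(* Let $M=(Q,\mathcal{A},\Delta,I,F)$ be a globally mintermised symbolic finite automaton and let $N=(Q,\mathbb{P}_\Delta,\Delta,I,F)$ be its syntactic NFA. Then $\preceq_M = \preceq_N$.
   Context: An effective Boolean algebra is $\mathcal{A}=(\mathfrak{D},\mathbb{P},[\![\cdot]\!],\vee,\wedge,\neg)$ where $\mathbb{P}$ is a set of predicates closed under $\vee,\wedge,\neg$, and $[\![\cdot]\!]:\mathbb{P}\to 2^{\mathfrak{D}}$ satisfies $[\![\varphi\vee\psi]\!]=[\![\varphi]\!]\cup[\![\psi]\!]$, $[\![\varphi\wedge\psi]\!]=[\![\varphi]\!]\cap[\![\psi]\!]$, $[\![\neg\varphi]\!]=\mathfrak{D}\setminus[\![\varphi]\!]$; $\mathit{IsSat}(\varphi)$ means $[\![\varphi]\!]\neq\emptyset$, and all operations and $\mathit{IsSat}$ are computable. A symbolic finite automaton (SFA) is $M=(Q,\mathcal{A},\Delta,I,F)$ with finite state set $Q$, a finite transition relation $\Delta\subseteq Q\times\mathbb{P}\times Q$ whose predicates are all satisfiable, initial states $I$ and final states $F$. Its concrete transitions are $[\![\Delta]\!]=\{(q,a,p)\mid (q,\psi,p)\in\Delta,\ a\in[\![\psi]\!]\}$. Let $\mathbb{P}_\Delta=\{\varphi\mid \exists p,q:(p,\varphi,q)\in\Delta\}$. A set of predicates is a partition if the denotations of any two distinct members are disjoint. $M$ is globally mintermised if $\mathbb{P}_\Delta$ is a partition. The syntactic NFA of $M$ is $(Q,\mathbb{P}_\Delta,\Delta,I,F)$, i.e.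 the NFA over the finite alphabet $\mathbb{P}_\Delta$ whose transitions are those of $\Delta$ with predicates treated as plain (syntactic) letters. A relation $S\subseteq Q\times Q$ is a simulation on the SFA $M$ if whenever $(p,r)\in S$: (C1) $p\in F$ implies $r\in F$; (C2) for all $a\in\mathfrak{D}$ and $p'$ with $(p,a,p')\in[\![\Delta]\!]$ there is $r'$ with $(r,a,r')\in[\![\Delta]\!]$ and $(p',r')\in S$. For an NFA (finite alphabet $\Sigma$, transitions $\Delta\subseteq Q\times\Sigma\times Q$), simulation is defined the same way with $a$ ranging over $\Sigma$ and the transitions of $\Delta$. $\preceq_M$ (resp. $\preceq_N$) denotes the unique maximal simulation on $M$ (resp. $N$). *)

theory Defs
  imports Main
begin

(* Computability of the operations / IsSat is not expressible in HOL. *)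
definition eff_bool_alg ::
  "'d set \<Rightarrow> 'p set \<Rightarrow> ('p \<Rightarrow> 'd set) \<Rightarrow> ('p \<Rightarrow> 'p \<Rightarrow> 'p) \<Rightarrow> ('p \<Rightarrow> 'p \<Rightarrow> 'p) \<Rightarrow> ('p \<Rightarrow> 'p) \<Rightarrow> bool"
where
  "eff_bool_alg D P den dis con neg \<longleftrightarrow>
     (\<forall>\<phi>\<in>P. den \<phi> \<subseteq> D) \<and>
     (\<forall>\<phi>\<in>P. \<forall>\<psi>\<in>P. dis \<phi> \<psi> \<in> P \<and> con \<phi> \<psi> \<in> P) \<and> (\<forall>\<phi>\<in>P. neg \<phi> \<in> P) \<and>
     (\<forall>\<phi>\<in>P. \<forall>\<psi>\<in>P. den (dis \<phi> \<psi>) = den \<phi> \<union> den \<psi>) \<and>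
     (\<forall>\<phi>\<in>P. \<forall>\<psi>\<in>P. den (con \<phi> \<psi>) = den \<phi> \<inter> den \<psi>) \<and>
     (\<forall>\<phi>\<in>P. den (neg \<phi>) = D - den \<phi>)"

definition IsSat :: "('p \<Rightarrow> 'd set) \<Rightarrow> 'p \<Rightarrow> bool" where
  "IsSat den \<phi> \<longleftrightarrow> den \<phi> \<noteq> {}"

definition is_SFA ::
  "'q set \<Rightarrow> 'd set \<Rightarrow> 'p set \<Rightarrow> ('p \<Rightarrow> 'd set) \<Rightarrow> ('p \<Rightarrow> 'p \<Rightarrow> 'p) \<Rightarrow> ('p \<Rightarrow> 'p \<Rightarrow> 'p) \<Rightarrow> ('p \<Rightarrow> 'p)
   \<Rightarrow> ('q \<times> 'p \<times> 'q) set \<Rightarrow> 'q set \<Rightarrow> 'q set \<Rightarrow> bool"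
where
  "is_SFA Q D P den dis con neg Delta I F \<longleftrightarrow>
     eff_bool_alg D P den dis con neg \<and> finite Q \<and> finite Delta \<and>
     Delta \<subseteq> Q \<times> P \<times> Q \<and> (\<forall>(q,\<psi>,p)\<in>Delta. IsSat den \<psi>) \<and> I \<subseteq> Q \<and> F \<subseteq> Q"

definition conc_trans :: "('p \<Rightarrow> 'd set) \<Rightarrow> ('q \<times> 'p \<times> 'q) set \<Rightarrow> ('q \<times> 'd \<times> 'q) set" where
  "conc_trans den Delta = {(q,a,p). \<exists>\<psi>. (q,\<psi>,p) \<in> Delta \<and> a \<in> den \<psi>}"

definition preds_of :: "('q \<times> 'p \<times> 'q) set \<Rightarrow> 'p set" where
  "preds_of Delta = {\<phi>. \<exists>p q. (p,\<phi>,q) \<in> Delta}"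

definition is_partition :: "('p \<Rightarrow> 'd set) \<Rightarrow> 'p set \<Rightarrow> bool" where
  "is_partition den Ps \<longleftrightarrow> (\<forall>\<phi>\<in>Ps. \<forall>\<psi>\<in>Ps. \<phi> \<noteq> \<psi> \<longrightarrow> den \<phi> \<inter> den \<psi> = {})"

definition globally_mintermised :: "('p \<Rightarrow> 'd set) \<Rightarrow> ('q \<times> 'p \<times> 'q) set \<Rightarrow> bool" where
  "globally_mintermised den Delta \<longleftrightarrow> is_partition den (preds_of Delta)"

definition is_simulation ::
  "'q set \<Rightarrow> 'a set \<Rightarrow> ('q \<times> 'a \<times> 'q) set \<Rightarrow> 'q set \<Rightarrow> ('q \<times> 'q) set \<Rightarrow> bool"
where
  "is_simulation Q Alph T F S \<longleftrightarrow> S \<subseteq> Q \<times> Q \<and>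
     (\<forall>(p,r)\<in>S. (p \<in> F \<longrightarrow> r \<in> F) \<and>
        (\<forall>a\<in>Alph. \<forall>p'. (p,a,p') \<in> T \<longrightarrow> (\<exists>r'. (r,a,r') \<in> T \<and> (p',r') \<in> S)))"

definition max_simulation ::
  "'q set \<Rightarrow> 'a set \<Rightarrow> ('q \<times> 'a \<times> 'q) set \<Rightarrow> 'q set \<Rightarrow> ('q \<times> 'q) set"
where
  "max_simulation Q Alph T F = \<Union>{S. is_simulation Q Alph T F S}"

definition sfa_max_sim ::
  "'q set \<Rightarrow> 'd set \<Rightarrow> ('p \<Rightarrow> 'd set) \<Rightarrow> ('q \<times> 'p \<times> 'q) set \<Rightarrow> 'q set \<Rightarrow> ('q \<times> 'q) set"
where
  "sfa_max_sim Q D den Delta F = max_simulation Q D (conc_trans den Delta) F"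

definition syn_nfa_max_sim ::
  "'q set \<Rightarrow> ('q \<times> 'p \<times> 'q) set \<Rightarrow> 'q set \<Rightarrow> ('q \<times> 'q) set"
where
  "syn_nfa_max_sim Q Delta F = max_simulation Q (preds_of Delta) Delta F"

end

theory Submission
  imports Defs
begin

(* A syntactic simulation is always a concrete one: a concrete step on a letter a comes from
   some syntactic step on a predicate containing a, which the simulating state can match.
   Conversely, pick a letter a from the (satisfiable) predicate of a syntactic step; the
   concrete step matching it uses a predicate that also contains a, and since the predicates
   of Delta form a partition this is the same predicate. *)

lemma is_simulationI:
  assumes "S \<subseteq> Q \<times> Q"
    and "\<And>p r. (p, r) \<in> S \<Longrightarrow> p \<in> F \<Longrightarrow> r \<in> F"
    and "\<And>p r a p'. (p, r) \<in> S \<Longrightarrow> a \<in> Alph \<Longrightarrow> (p, a, p') \<in> T \<Longrightarrow>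
           \<exists>r'. (r, a, r') \<in> T \<and> (p', r') \<in> S"
  shows "is_simulation Q Alph T F S"
  using assms unfolding is_simulation_def by blast

lemma is_simulationD:
  assumes "is_simulation Q Alph T F S" and "(p, r) \<in> S"
  shows is_simulation_final: "p \<in> F \<Longrightarrow> r \<in> F"
    and is_simulation_step: "a \<in> Alph \<Longrightarrow> (p, a, p') \<in> T \<Longrightarrow>
           \<exists>r'. (r, a, r') \<in> T \<and> (p', r') \<in> S"
  using assms unfolding is_simulation_def by blast+

lemma is_simulation_subset: "is_simulation Q Alph T F S \<Longrightarrow> S \<subseteq> Q \<times> Q"
  unfolding is_simulation_def by blast

lemma conc_trans_iff: "(q, a, p) \<in> conc_trans den Delta \<longleftrightarrow> (\<exists>\<psi>. (q, \<psi>, p) \<in> Delta \<and> a \<in> den \<psi>)"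
  unfolding conc_trans_def by blast

lemma preds_ofI: "(p, \<phi>, q) \<in> Delta \<Longrightarrow> \<phi> \<in> preds_of Delta"
  unfolding preds_of_def by blast

lemma is_SFA_trans_pred_sat:
  assumes "is_SFA Q D P den dis con neg Delta I F" and "(p, \<phi>, q) \<in> Delta"
  shows "den \<phi> \<inter> D \<noteq> {}"
proof -
  from assms(1) have trans: "Delta \<subseteq> Q \<times> P \<times> Q"
    and sat: "\<forall>(q, \<psi>, p)\<in>Delta. IsSat den \<psi>" and alg: "eff_bool_alg D P den dis con neg"
    unfolding is_SFA_def by simp_all
  have "\<phi> \<in> P"
    using trans assms(2) by blast
  moreover have "\<forall>\<phi>\<in>P. den \<phi> \<subseteq> D"
    using alg unfolding eff_bool_alg_def by (rule conjunct1)
  ultimately have "den \<phi> \<subseteq> D" by blast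
  moreover have "den \<phi> \<noteq> {}"
    using sat assms(2) unfolding IsSat_def by blast
  ultimately show ?thesis by blast
qed

lemma syntactic_simulation_imp_conc_simulation:
  assumes sim: "is_simulation Q (preds_of Delta) Delta F S"
  shows "is_simulation Q D (conc_trans den Delta) F S"
proof (rule is_simulationI)
  show "S \<subseteq> Q \<times> Q" using sim by (rule is_simulation_subset)
next
  fix p r assume "(p, r) \<in> S" "p \<in> F"
  then show "r \<in> F" using sim by (blast dest: is_simulation_final)
next
  fix p r a p' assume pr: "(p, r) \<in> S" and "(p, a, p') \<in> conc_trans den Delta"
  then obtain \<phi> where step: "(p, \<phi>, p') \<in> Delta" and a: "a \<in> den \<phi>"
    by (auto simp: conc_trans_iff)
  obtain r' where "(r, \<phi>, r') \<in> Delta" "(p', r') \<in> S"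
    using is_simulation_step[OF sim pr preds_ofI[OF step] step] by blast
  then show "\<exists>r'. (r, a, r') \<in> conc_trans den Delta \<and> (p', r') \<in> S"
    using a by (auto simp: conc_trans_iff)
qed

lemma conc_simulation_imp_syntactic_simulation:
  assumes part: "is_partition den (preds_of Delta)"
    and sat: "\<And>p \<phi> q. (p, \<phi>, q) \<in> Delta \<Longrightarrow> den \<phi> \<inter> D \<noteq> {}"
    and sim: "is_simulation Q D (conc_trans den Delta) F S"
  shows "is_simulation Q (preds_of Delta) Delta F S"
proof (rule is_simulationI)
  show "S \<subseteq> Q \<times> Q" using sim by (rule is_simulation_subset)
next
  fix p r assume "(p, r) \<in> S" "p \<in> F"
  then show "r \<in> F" using sim by (blast dest: is_simulation_final)
next
  fix p r \<phi> p' assume pr: "(p, r) \<in> S" and step: "(p, \<phi>, p') \<in> Delta"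
  obtain a where a: "a \<in> den \<phi>" "a \<in> D" using sat[OF step] by blast
  have "(p, a, p') \<in> conc_trans den Delta"
    using step a(1) by (auto simp: conc_trans_iff)
  then have "\<exists>r'. (r, a, r') \<in> conc_trans den Delta \<and> (p', r') \<in> S"
    by (rule is_simulation_step[OF sim pr a(2)])
  then obtain r' \<psi> where match: "(r, \<psi>, r') \<in> Delta" "a \<in> den \<psi>" and "(p', r') \<in> S"
    by (auto simp: conc_trans_iff)
  have "\<psi> = \<phi>"
    using part preds_ofI[OF step] preds_ofI[OF match(1)] a(1) match(2)
    unfolding is_partition_def by blast
  then show "\<exists>r'. (r, \<phi>, r') \<in> Delta \<and> (p', r') \<in> S"
    using match(1) \<open>(p', r') \<in> S\<close> by blast
qed

theorem lemma2:
  fixes Q :: "'q set" and D :: "'d set" and P :: "'p set"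
    and den :: "'p \<Rightarrow> 'd set" and dis con :: "'p \<Rightarrow> 'p \<Rightarrow> 'p" and neg :: "'p \<Rightarrow> 'p"
    and Delta :: "('q \<times> 'p \<times> 'q) set" and I F :: "'q set"
  assumes "is_SFA Q D P den dis con neg Delta I F"
    and "globally_mintermised den Delta"
  shows "sfa_max_sim Q D den Delta F = syn_nfa_max_sim Q Delta F"
proof -
  have part: "is_partition den (preds_of Delta)"
    using assms(2) unfolding globally_mintermised_def .
  have "is_simulation Q D (conc_trans den Delta) F = is_simulation Q (preds_of Delta) Delta F"
  proof (intro ext iffI)
    fix S
    show "is_simulation Q D (conc_trans den Delta) F S \<Longrightarrow> is_simulation Q (preds_of Delta) Delta F S"
      using part is_SFA_trans_pred_sat[OF assms(1)] by (rule conc_simulation_imp_syntactic_simulation)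
    show "is_simulation Q (preds_of Delta) Delta F S \<Longrightarrow> is_simulation Q D (conc_trans den Delta) F S"
      by (rule syntactic_simulation_imp_conc_simulation)
  qed
  then show ?thesis
    unfolding sfa_max_sim_def syn_nfa_max_sim_def max_simulation_def by simp
qed

end
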